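(* Let $a,b,c\in\mathbb R$ with $c+1>a+b$ and $c$ not a nonpositive integer, and for real $q>-1$ put \[ F(q):={}_3F_2\!\left({a,b,q\atop c,q+1};1\right). \] Then \[ \frac{(q+1-a)(q+1-b)}{q+1}F(q+1)-(q+1-c)F(q)=\frac{\Gamma(c)\,\Gamma(c+1-a-b)}{\Gamma(c-a)\,\Gamma(c-b)}, \] with the convention $1/\Gamma(-n)=0$ for nonnegative integers $n$.
   Context: ${}_3F_2\!\left({a_1,a_2,a_3\atop b_1,b_2};x\right)=\sum_{n\ge0}\frac{(a_1)_n(a_2)_n(a_3)_n}{(b_1)_n(b_2)_n}\frac{x^n}{n!}$ with $(x)_n=x(x+1)\cdots(x+n-1)$; at $x=1$ it converges when $b_1+b_2-a_1-a_2-a_3>0$. *)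

theory Defs
  imports "HOL-Analysis.Analysis"
begin

definition hyp3F2 :: "real \<Rightarrow> real \<Rightarrow> real \<Rightarrow> real \<Rightarrow> real \<Rightarrow> real \<Rightarrow> real" where
  "hyp3F2 a1 a2 a3 b1 b2 x =
     (\<Sum>n. pochhammer a1 n * pochhammer a2 n * pochhammer a3 n
            / (pochhammer b1 n * pochhammer b2 n) * x ^ n / fact n)"

end

theory Submission
  imports Defs "HOL-Real_Asymp.Real_Asymp"
begin

text \<open>
  Write \<open>t n\<close> for the \<open>n\<close>-th term of 2F1(a,b;c;1). As (q)_n/(q+1)_n = q/(q+n), the two 3F2
  series are the sums of \<open>t n * q/(q+n)\<close> and of \<open>t n * (q+1)/(q+1+n)\<close>. Termwise, the combination
  on the left differs from (c-a)(c-b)/c times the \<open>n\<close>-th term of 2F1(a,b;c+1;1) by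
  \<open>D (n+1) - D n\<close>, where \<open>D n = (c-q-1) * t n * n/(q+n)\<close> tends to 0 because
  \<open>t n = O(n powr (a+b-c-1))\<close>. Hence the left side is (c-a)(c-b)/c * 2F1(a,b;c+1;1), which
  Gauss's summation theorem evaluates. Gauss's theorem is proved classically: the same kind of
  telescoping gives the contiguous relation (c-a-b) F(c) = (c-a)(c-b)/c * F(c+1); iterated m
  times, the accumulated Pochhammer quotient tends to \<Gamma>(c)\<Gamma>(c-a-b)/(\<Gamma>(c-a)\<Gamma>(c-b)) while
  F(c+m) tends to 1.
\<close>

definition hyp2F1_coeff :: "real \<Rightarrow> real \<Rightarrow> real \<Rightarrow> nat \<Rightarrow> real" where
  "hyp2F1_coeff a b c n = pochhammer a n * pochhammer b n / (pochhammer c n * fact n)"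

lemma plus_of_nat_notin_nonpos_Ints:
  fixes z :: "'a :: ring_char_0"
  assumes "z \<notin> \<int>\<^sub>\<le>\<^sub>0"
  shows "z + of_nat m \<notin> \<int>\<^sub>\<le>\<^sub>0"
  using nonpos_Ints_diff_Nats[of "z + of_nat m" "of_nat m"] assms by auto

lemma pochhammer_plus1_eq: "z * pochhammer (z + 1) n = pochhammer z n * (z + of_nat n)"
  by (metis pochhammer_Suc pochhammer_rec)

text \<open>The form \<open>1 - n/(z + n)\<close> rather than \<open>z/(z + n)\<close> keeps the identity true for \<open>z = 0, n = 0\<close>.\<close>

lemma pochhammer_div_pochhammer_plus1:
  fixes z :: "'a :: field_char_0"
  assumes "z + 1 \<notin> \<int>\<^sub>\<le>\<^sub>0"
  shows "pochhammer z n / pochhammer (z + 1) n = 1 - of_nat n / (z + of_nat n)"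
proof (cases n)
  case (Suc k)
  have "z + of_nat n \<noteq> 0"
    using plus_of_nat_notin_nonpos_Ints[OF assms, of k] Suc by (auto simp: algebra_simps)
  moreover have "pochhammer (z + 1) n \<noteq> 0"
    using assms by (auto dest: pochhammer_eq_0_imp_nonpos_Int)
  ultimately show ?thesis
    using pochhammer_plus1_eq[of z n] by (simp add: field_simps)
qed simp

lemma pochhammer_mono:
  fixes x y :: real
  assumes "0 \<le> x" "x \<le> y"
  shows "pochhammer x n \<le> pochhammer y n"
  unfolding pochhammer_prod using assms by (intro prod_mono) auto

lemma bigo_powr_mult:
  fixes f g :: "nat \<Rightarrow> real"
  assumes "f \<in> O(\<lambda>n. real n powr d)" "g \<in> O(\<lambda>n. real n powr e)"
  shows "(\<lambda>n. f n * g n) \<in> O(\<lambda>n. real n powr (d + e))"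
  using landau_o.big.mult[OF assms] by (simp add: powr_add)

lemma summable_abs_if_bigo_powr:
  fixes f :: "nat \<Rightarrow> real"
  assumes "f \<in> O(\<lambda>n. real n powr e)" "e < -1"
  shows "summable (\<lambda>n. \<bar>f n\<bar>)"
proof (rule summable_comparison_test_bigo)
  show "(\<lambda>n. \<bar>f n\<bar>) \<in> O(\<lambda>n. real n powr e)"
    using assms(1) by simp
  show "summable (\<lambda>n. norm (real n powr e))"
    using assms(2) by (simp add: summable_real_powr_iff)
qed

lemma LIMSEQ_zero_if_bigo_powr:
  fixes f :: "nat \<Rightarrow> real"
  assumes "f \<in> O(\<lambda>n. real n powr e)" "e < 0"
  shows "f \<longlonglongrightarrow> 0"
proof -
  have "(\<lambda>n. real n powr e) \<in> o(\<lambda>_. 1)"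
    using assms(2) by real_asymp
  from smalloD_tendsto[OF landau_o.big_small_trans[OF assms(1) this]] show ?thesis
    by simp
qed

section \<open>Asymptotics of Pochhammer quotients\<close>

lemma pochhammer_over_fact_powr_LIMSEQ:
  "(\<lambda>n. pochhammer z n / (fact n * real n powr (z - 1))) \<longlonglongrightarrow> rGamma z"
proof (rule Lim_transform_eventually)
  have "(\<lambda>n. rGamma_series z n * (real n / (z + real n))) \<longlonglongrightarrow> rGamma z * 1"
    by (intro tendsto_intros) real_asymp
  then show "(\<lambda>n. rGamma_series z n * (real n / (z + real n))) \<longlonglongrightarrow> rGamma z"
    by simp
  show "\<forall>\<^sub>F n in sequentially. rGamma_series z n * (real n / (z + real n))
          = pochhammer z n / (fact n * real n powr (z - 1))"
    using eventually_gt_at_top[of "nat \<lceil>\<bar>z\<bar>\<rceil>"]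
  proof eventually_elim
    case (elim n)
    then have "real n > 0" "z + real n > 0" by linarith+
    moreover have "exp (z * ln (real n)) = real n powr (z - 1) * real n"
      using \<open>real n > 0\<close> powr_add[of "real n" "z - 1" 1] by (simp add: powr_def)
    ultimately show ?case
      by (simp add: rGamma_series_def pochhammer_Suc)
  qed
qed

lemma pochhammer_quotient_asymp:
  fixes x y z w :: real
  assumes "z \<notin> \<int>\<^sub>\<le>\<^sub>0" "w \<notin> \<int>\<^sub>\<le>\<^sub>0"
  shows "(\<lambda>n. pochhammer x n * pochhammer y n / (pochhammer z n * pochhammer w n)
            / real n powr (x + y - z - w)) \<longlonglongrightarrow> Gamma z * Gamma w * rGamma x * rGamma y"
proof (rule Lim_transform_eventually)
  define P where "P v n = pochhammer v n / (fact n * real n powr (v - 1))" for v n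
  have "(\<lambda>n. P x n * P y n / (P z n * P w n)) \<longlonglongrightarrow> rGamma x * rGamma y / (rGamma z * rGamma w)"
    unfolding P_def using assms
    by (intro tendsto_intros pochhammer_over_fact_powr_LIMSEQ) (auto simp: rGamma_eq_zero_iff)
  then show "(\<lambda>n. P x n * P y n / (P z n * P w n)) \<longlonglongrightarrow> Gamma z * Gamma w * rGamma x * rGamma y"
    by (simp add: Gamma_def divide_inverse mult_ac)
  show "\<forall>\<^sub>F n in sequentially. P x n * P y n / (P z n * P w n)
          = pochhammer x n * pochhammer y n / (pochhammer z n * pochhammer w n) / real n powr (x + y - z - w)"
    using eventually_gt_at_top[of 0]
  proof eventually_elim
    case (elim n)
    define N where "N = real n powr (x + y - z - w)"
    have pos: "fact n * real n powr (v - 1) > 0" for v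
      using elim by simp
    have poch: "pochhammer v n = P v n * (fact n * real n powr (v - 1))" for v
      using pos[of v] elim by (simp add: P_def)
    have "P z n \<noteq> 0" "P w n \<noteq> 0" "N \<noteq> 0"
      using assms elim pos by (auto simp: P_def N_def dest: pochhammer_eq_0_imp_nonpos_Int)
    moreover have "real n powr (x - 1) * real n powr (y - 1) = real n powr (z - 1) * real n powr (w - 1) * N"
      by (simp add: N_def flip: powr_add) (simp add: algebra_simps)
    ultimately show ?case
      unfolding poch[of x] poch[of y] poch[of z] poch[of w] N_def[symmetric]
      using pos[of z] pos[of w] elim by (simp add: divide_simps)
  qed
qed

lemma hyp2F1_coeff_asymp:
  assumes "c \<notin> \<int>\<^sub>\<le>\<^sub>0"
  shows "(\<lambda>n. hyp2F1_coeff a b c n / real n powr (a + b - c - 1)) \<longlonglongrightarrow> Gamma c * rGamma a * rGamma b"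
  using pochhammer_quotient_asymp[OF assms, of 1 a b] by (simp add: hyp2F1_coeff_def pochhammer_fact)

lemma hyp2F1_coeff_bigo:
  assumes "c \<notin> \<int>\<^sub>\<le>\<^sub>0"
  shows "hyp2F1_coeff a b c \<in> O(\<lambda>n. real n powr (a + b - c - 1))"
proof (rule bigoI_tendsto)
  show "(\<lambda>n. hyp2F1_coeff a b c n / real n powr (a + b - c - 1)) \<longlonglongrightarrow> Gamma c * rGamma a * rGamma b"
    by (rule hyp2F1_coeff_asymp[OF assms])
  show "\<forall>\<^sub>F n in sequentially. real n powr (a + b - c - 1) \<noteq> 0"
    using eventually_gt_at_top[of 0] by eventually_elim simp
qed

lemma summable_hyp2F1_coeff:
  assumes "c \<notin> \<int>\<^sub>\<le>\<^sub>0" "a + b < c"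
  shows "summable (\<lambda>n. \<bar>hyp2F1_coeff a b c n\<bar>)"
  using summable_abs_if_bigo_powr[OF hyp2F1_coeff_bigo[OF assms(1)]] assms(2) by simp

lemma hyp2F1_coeff_Suc:
  assumes "c \<notin> \<int>\<^sub>\<le>\<^sub>0"
  shows "(real n + 1) * hyp2F1_coeff a b c (Suc n)
           = hyp2F1_coeff a b c n * ((a + real n) * (b + real n) / (c + real n))"
proof -
  have "pochhammer c n \<noteq> 0" "c + real n \<noteq> 0"
    using assms plus_of_nat_notin_nonpos_Ints[OF assms, of n]
    by (auto dest: pochhammer_eq_0_imp_nonpos_Int)
  then show ?thesis
    unfolding hyp2F1_coeff_def by (simp add: pochhammer_Suc divide_simps)
qed

lemma hyp2F1_coeff_plus1:
  assumes "c \<notin> \<int>\<^sub>\<le>\<^sub>0"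
  shows "hyp2F1_coeff a b (c + 1) n = hyp2F1_coeff a b c n * (c / (c + real n))"
proof -
  have nz: "c \<noteq> 0" "c + real n \<noteq> 0" "pochhammer c n \<noteq> 0"
    using assms plus_of_nat_notin_nonpos_Ints[OF assms, of n]
    by (auto dest: pochhammer_eq_0_imp_nonpos_Int)
  have shift: "pochhammer (c + 1) n = pochhammer c n * (c + real n) / c"
    using pochhammer_plus1_eq[of c n] nz by (simp add: field_simps)
  show ?thesis
    unfolding hyp2F1_coeff_def shift using nz by (simp add: field_simps)
qed

section \<open>Gauss's summation theorem\<close>

lemma hyp2F1_contiguous_term:
  assumes "c \<notin> \<int>\<^sub>\<le>\<^sub>0"
  shows "(c - a - b) * hyp2F1_coeff a b c n - (c - a) * (c - b) / c * hyp2F1_coeff a b (c + 1) n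
           = real n * hyp2F1_coeff a b c n - real (Suc n) * hyp2F1_coeff a b c (Suc n)"
proof -
  define t where "t = hyp2F1_coeff a b c"
  have nz: "c \<noteq> 0" "c + real n \<noteq> 0"
    using plus_of_nat_notin_nonpos_Ints[OF assms, of n] assms by auto
  define A where "A = (c - a) * (c - b) / (c + real n)"
  define B where "B = (a + real n) * (b + real n) / (c + real n)"
  have "(c - a) * (c - b) / c * hyp2F1_coeff a b (c + 1) n = t n * A"
    unfolding t_def A_def hyp2F1_coeff_plus1[OF assms] using nz by simp
  then have "(c - a - b) * t n - (c - a) * (c - b) / c * hyp2F1_coeff a b (c + 1) n
               = t n * ((c - a - b) - A)"
    by (simp add: algebra_simps)
  also have "\<dots> = t n * (real n - B)"
    unfolding A_def B_def using nz by (simp add: field_simps)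
  also have "\<dots> = real n * t n - real (Suc n) * t (Suc n)"
    using hyp2F1_coeff_Suc[OF assms, of n a b] unfolding t_def B_def by (simp add: algebra_simps)
  finally show ?thesis
    unfolding t_def .
qed

lemma hyp2F1_contiguous:
  assumes "c \<notin> \<int>\<^sub>\<le>\<^sub>0" "a + b < c"
  shows "(c - a - b) * (\<Sum>n. hyp2F1_coeff a b c n)
           = (c - a) * (c - b) / c * (\<Sum>n. hyp2F1_coeff a b (c + 1) n)"
proof -
  define t where "t = hyp2F1_coeff a b c"
  define t' where "t' = hyp2F1_coeff a b (c + 1)"
  define K where "K = (c - a) * (c - b) / c"
  define E where "E = (\<lambda>n. - (real n * t n))"
  have c1: "c + 1 \<notin> \<int>\<^sub>\<le>\<^sub>0"
    using plus_of_nat_notin_nonpos_Ints[OF assms(1), of 1] by simp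
  have step: "(c - a - b) * t n - K * t' n = E (Suc n) - E n" for n
    using hyp2F1_contiguous_term[OF assms(1), of a b n] unfolding t_def t'_def K_def E_def by simp
  have "(\<lambda>n. real n * t n) \<in> O(\<lambda>n. real n powr (1 + (a + b - c - 1)))"
    unfolding t_def by (rule bigo_powr_mult[OF _ hyp2F1_coeff_bigo[OF assms(1)]]) real_asymp
  then have "(\<lambda>n. real n * t n) \<longlonglongrightarrow> 0"
    by (rule LIMSEQ_zero_if_bigo_powr) (use assms(2) in simp)
  then have "(\<lambda>n. - (real n * t n)) \<longlonglongrightarrow> - 0"
    by (rule tendsto_minus)
  then have "E \<longlonglongrightarrow> 0"
    unfolding E_def by simp
  then have "(\<lambda>n. E (Suc n) - E n) sums (0 - E 0)"
    by (rule telescope_sums)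
  then have "(\<lambda>n. (c - a - b) * t n - K * t' n) sums 0"
    unfolding step by (simp add: E_def)
  moreover have "summable t" "summable t'"
    using summable_hyp2F1_coeff[OF assms] summable_hyp2F1_coeff[OF c1, of a b] assms(2)
    unfolding t_def t'_def by (auto intro: summable_rabs_cancel)
  then have "(\<lambda>n. (c - a - b) * t n - K * t' n) sums ((c - a - b) * suminf t - K * suminf t')"
    by (intro sums_diff sums_mult summable_sums)
  ultimately have "(c - a - b) * suminf t - K * suminf t' = 0"
    by (simp add: sums_iff)
  then show ?thesis
    unfolding K_def t_def t'_def by simp
qed

lemma hyp2F1_sum_shift:
  assumes "c \<notin> \<int>\<^sub>\<le>\<^sub>0" "a + b < c"
  shows "(\<Sum>n. hyp2F1_coeff a b c n)
           = pochhammer (c - a) m * pochhammer (c - b) m / (pochhammer c m * pochhammer (c - a - b) m)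
             * (\<Sum>n. hyp2F1_coeff a b (c + real m) n)"
proof -
  define R where "R k = pochhammer (c - a) k * pochhammer (c - b) k / (pochhammer c k * pochhammer (c - a - b) k)"
    for k
  have "(\<Sum>n. hyp2F1_coeff a b c n) = R m * (\<Sum>n. hyp2F1_coeff a b (c + real m) n)"
  proof (induction m)
    case (Suc m)
    define c' where "c' = c + real m"
    have c': "c' \<notin> \<int>\<^sub>\<le>\<^sub>0" "a + b < c'"
      using plus_of_nat_notin_nonpos_Ints[OF assms(1)] assms(2) by (auto simp: c'_def)
    have e: "c - a + real m = c' - a" "c - b + real m = c' - b" "c + real m = c'"
      "c - a - b + real m = c' - a - b" "c + real (Suc m) = c' + 1"
      by (simp_all add: c'_def)
    have contiguous: "(\<Sum>n. hyp2F1_coeff a b c' n)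
                 = (c' - a) * (c' - b) / c' / (c' - a - b) * (\<Sum>n. hyp2F1_coeff a b (c' + 1) n)"
      using hyp2F1_contiguous[OF c'] c' by (auto simp: eq_divide_eq mult_ac simp flip: divide_divide_eq_left)
    have "(\<Sum>n. hyp2F1_coeff a b c n) = R m * (\<Sum>n. hyp2F1_coeff a b c' n)"
      using Suc.IH by (simp add: c'_def)
    also have "\<dots> = R m * ((c' - a) * (c' - b) / c' / (c' - a - b)) * (\<Sum>n. hyp2F1_coeff a b (c' + 1) n)"
      unfolding contiguous by (simp only: mult.assoc)
    also have "\<dots> = R (Suc m) * (\<Sum>n. hyp2F1_coeff a b (c + real (Suc m)) n)"
      unfolding R_def pochhammer_Suc e by (simp add: divide_inverse ac_simps)
    finally show ?case .
  qed (simp add: R_def)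
  then show ?thesis
    unfolding R_def .
qed

lemma hyp2F1_coeff_tail_bound:
  assumes "0 < x0" "x0 \<le> x"
  shows "\<bar>hyp2F1_coeff a b x n - (if n = 0 then 1 else 0)\<bar> \<le> x0 / x * \<bar>hyp2F1_coeff a b x0 n\<bar>"
proof (cases n)
  case (Suc k)
  define N where "N = \<bar>pochhammer a n * pochhammer b n\<bar> / fact n"
  have coeff: "\<bar>hyp2F1_coeff a b y n\<bar> = N / (y * pochhammer (y + 1) k)" if "y > 0" for y
  proof -
    have "pochhammer (y + 1) k > 0"
      using that by (intro pochhammer_pos) simp
    then show ?thesis
      using that unfolding hyp2F1_coeff_def N_def Suc pochhammer_rec by (simp add: abs_mult abs_divide)
  qed
  have "0 < pochhammer (x0 + 1) k" "pochhammer (x0 + 1) k \<le> pochhammer (x + 1) k"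
    using assms by (auto intro: pochhammer_pos pochhammer_mono)
  have "\<bar>hyp2F1_coeff a b x n - (if n = 0 then 1 else 0)\<bar> = N / (x * pochhammer (x + 1) k)"
    using Suc coeff[of x] assms by simp
  also have "\<dots> \<le> N / (x * pochhammer (x0 + 1) k)"
    using assms \<open>0 < pochhammer (x0 + 1) k\<close> \<open>pochhammer (x0 + 1) k \<le> pochhammer (x + 1) k\<close>
    unfolding N_def by (intro divide_left_mono mult_left_mono mult_pos_pos) auto
  also have "\<dots> = x0 / x * \<bar>hyp2F1_coeff a b x0 n\<bar>"
    using coeff[of x0] assms by simp
  finally show ?thesis .
qed (use assms in \<open>simp add: hyp2F1_coeff_def\<close>)

lemma hyp2F1_sum_tendsto_1: "((\<lambda>x. \<Sum>n. hyp2F1_coeff a b x n) \<longlongrightarrow> 1) at_top"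
proof -
  define x0 where "x0 = max 1 (a + b + 1)"
  have x0: "0 < x0" "a + b < x0"
    by (auto simp: x0_def)
  have admissible: "x \<notin> \<int>\<^sub>\<le>\<^sub>0" "a + b < x" if "x0 \<le> x" for x
    using that x0 by auto
  define S where "S = (\<Sum>n. \<bar>hyp2F1_coeff a b x0 n\<bar>)"
  have summable_x0: "summable (\<lambda>n. \<bar>hyp2F1_coeff a b x0 n\<bar>)"
    using summable_hyp2F1_coeff admissible by simp
  have "\<forall>\<^sub>F x in at_top. norm ((\<Sum>n. hyp2F1_coeff a b x n) - 1) \<le> x0 / x * S"
    using eventually_ge_at_top[of x0]
  proof eventually_elim
    case (elim x)
    have "summable (hyp2F1_coeff a b x)"
      using summable_hyp2F1_coeff[OF admissible[OF elim]] by (rule summable_rabs_cancel)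
    from sums_diff[OF summable_sums[OF this] sums_single[of 0 "\<lambda>_. 1 :: real"]]
    have "(\<Sum>n. hyp2F1_coeff a b x n) - 1 = (\<Sum>n. hyp2F1_coeff a b x n - (if n = 0 then 1 else 0))"
      by (simp add: sums_iff)
    also have "norm \<dots> \<le> (\<Sum>n. x0 / x * \<bar>hyp2F1_coeff a b x0 n\<bar>)"
      using hyp2F1_coeff_tail_bound[OF x0(1) elim] summable_mult[OF summable_x0]
      by (intro norm_suminf_le) auto
    also have "\<dots> = x0 / x * S"
      unfolding S_def by (rule suminf_mult[OF summable_x0])
    finally show ?case .
  qed
  moreover have "((\<lambda>x. x0 / x * S) \<longlongrightarrow> 0) at_top"
    by real_asymp
  ultimately have "((\<lambda>x. (\<Sum>n. hyp2F1_coeff a b x n) - 1) \<longlongrightarrow> 0) at_top"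
    by (rule Lim_null_comparison)
  then show ?thesis
    by (rule LIM_zero_cancel)
qed

theorem gauss_hyp2F1_sum:
  assumes "c \<notin> \<int>\<^sub>\<le>\<^sub>0" "a + b < c"
  shows "(\<Sum>n. hyp2F1_coeff a b c n) = Gamma c * Gamma (c - a - b) * rGamma (c - a) * rGamma (c - b)"
proof -
  define R where "R m = pochhammer (c - a) m * pochhammer (c - b) m / (pochhammer c m * pochhammer (c - a - b) m)"
    for m
  have "c - a - b \<notin> \<int>\<^sub>\<le>\<^sub>0"
    using assms(2) by auto
  from pochhammer_quotient_asymp[OF assms(1) this, of "c - a" "c - b"]
  have "(\<lambda>m. R m / real m powr 0) \<longlonglongrightarrow> Gamma c * Gamma (c - a - b) * rGamma (c - a) * rGamma (c - b)"
    by (simp add: R_def)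
  then have "R \<longlonglongrightarrow> Gamma c * Gamma (c - a - b) * rGamma (c - a) * rGamma (c - b)"
    by (rule Lim_transform_eventually) (use eventually_gt_at_top[of 0] in \<open>eventually_elim, simp\<close>)
  moreover have "(\<lambda>m. \<Sum>n. hyp2F1_coeff a b (c + real m) n) \<longlonglongrightarrow> 1"
    using hyp2F1_sum_tendsto_1 by (rule filterlim_compose) real_asymp
  ultimately have "(\<lambda>m. R m * (\<Sum>n. hyp2F1_coeff a b (c + real m) n))
                     \<longlonglongrightarrow> Gamma c * Gamma (c - a - b) * rGamma (c - a) * rGamma (c - b) * 1"
    by (rule tendsto_mult)
  then show ?thesis
    unfolding R_def hyp2F1_sum_shift[OF assms, symmetric] by (simp add: LIMSEQ_const_iff)
qed

lemma Gamma_quotient_shift: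
  assumes "c \<notin> \<int>\<^sub>\<le>\<^sub>0"
  shows "(c - a) * (c - b) / c * (Gamma (c + 1) * g * rGamma (c + 1 - a) * rGamma (c + 1 - b))
           = Gamma c * g * rGamma (c - a) * rGamma (c - b)"
proof -
  have "rGamma (c - a) = (c - a) * rGamma (c + 1 - a)" "rGamma (c - b) = (c - b) * rGamma (c + 1 - b)"
    using rGamma_plus1[of "c - a"] rGamma_plus1[of "c - b"] by (simp_all add: algebra_simps)
  moreover have "c \<noteq> 0"
    using assms by auto
  ultimately show ?thesis
    unfolding Gamma_plus1[OF assms] by simp
qed

section \<open>The contiguity relation for the 3F2 series\<close>

lemma hyp3F2_as_weighted_hyp2F1_sum:
  assumes "x + 1 \<notin> \<int>\<^sub>\<le>\<^sub>0"
  shows "hyp3F2 a b x c (x + 1) 1 = (\<Sum>n. hyp2F1_coeff a b c n * (1 - real n / (x + real n)))"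
  unfolding hyp3F2_def hyp2F1_coeff_def pochhammer_div_pochhammer_plus1[OF assms, symmetric]
  by (simp add: divide_inverse ac_simps)

lemma summable_hyp2F1_coeff_weighted:
  assumes "c \<notin> \<int>\<^sub>\<le>\<^sub>0" "a + b < c + 1"
  shows "summable (\<lambda>n. hyp2F1_coeff a b c n * (1 - real n / (x + real n)))"
proof -
  have "(\<lambda>n. 1 - real n / (x + real n)) \<in> O(\<lambda>n. real n powr -1)"
    by real_asymp
  from bigo_powr_mult[OF hyp2F1_coeff_bigo[OF assms(1)] this]
  have "summable (\<lambda>n. \<bar>hyp2F1_coeff a b c n * (1 - real n / (x + real n))\<bar>)"
    by (rule summable_abs_if_bigo_powr) (use assms(2) in simp)
  then show ?thesis
    by (rule summable_rabs_cancel)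
qed

lemma contiguity_rational_identity:
  fixes a b c p n :: real
  assumes "p \<noteq> 0" "p + n \<noteq> 0" "c \<noteq> 0" "c + n \<noteq> 0"
  shows "(p - a) * (p - b) / p * (1 - n / (p + n)) - (p - c)
           = (c - p) * ((a + n) * (b + n) / (c + n) / (p + n)) + (c - a) * (c - b) / c * (c / (c + n))"
proof -
  obtain Q C where Q: "p + n = Q" and C: "c + n = C"
    by blast
  have "Q \<noteq> 0" "C \<noteq> 0"
    using assms Q C by auto
  then show ?thesis
    unfolding Q C using assms(1,3)
    by (simp add: field_simps) (simp add: Q[symmetric] C[symmetric] algebra_simps)
qed

lemma hyp3F2_contiguous_term:
  fixes a b c q :: real
  defines "t \<equiv> hyp2F1_coeff a b c"
    and "D \<equiv> \<lambda>n. (c - q - 1) * (hyp2F1_coeff a b c n * (real n / (q + real n)))"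
  assumes "c \<notin> \<int>\<^sub>\<le>\<^sub>0" "q > -1"
  shows "(q + 1 - a) * (q + 1 - b) / (q + 1) * (t n * (1 - real n / (q + 1 + real n)))
           - (q + 1 - c) * (t n * (1 - real n / (q + real n)))
         = D (Suc n) - D n + (c - a) * (c - b) / c * hyp2F1_coeff a b (c + 1) n"
proof -
  have nz: "c \<noteq> 0" "c + real n \<noteq> 0" "q + 1 + real n \<noteq> 0" "q + 1 \<noteq> 0"
    using plus_of_nat_notin_nonpos_Ints[OF assms(3), of n] assms by auto
  define \<alpha> where "\<alpha> = (q + 1 - a) * (q + 1 - b) / (q + 1)"
  define K where "K = (c - a) * (c - b) / c"
  define s where "s = real n / (q + 1 + real n)"
  define X where "X = (a + real n) * (b + real n) / (c + real n) / (q + 1 + real n)"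
  have "D (Suc n) = (c - q - 1) * ((real n + 1) * t (Suc n) / (q + 1 + real n))"
    unfolding D_def t_def by (simp add: add_ac)
  also have "(real n + 1) * t (Suc n) = t n * ((a + real n) * (b + real n) / (c + real n))"
    unfolding t_def by (rule hyp2F1_coeff_Suc[OF assms(3)])
  finally have D_Suc: "D (Suc n) = (c - q - 1) * (t n * X)"
    unfolding X_def by simp
  have shift: "K * hyp2F1_coeff a b (c + 1) n = t n * (K * (c / (c + real n)))"
    unfolding t_def hyp2F1_coeff_plus1[OF assms(3)] by simp
  have rational: "\<alpha> * (1 - s) - (q + 1 - c) = (c - q - 1) * X + K * (c / (c + real n))"
    using contiguity_rational_identity[of "q + 1" "real n" c a b] nz
    unfolding \<alpha>_def K_def s_def X_def by (simp add: add_ac diff_diff_eq)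
  define r where "r = real n / (q + real n)"
  have "D n = (c - q - 1) * (t n * r)"
    unfolding D_def t_def r_def ..
  then have "\<alpha> * (t n * (1 - s)) - (q + 1 - c) * (t n * (1 - r))
          = t n * (\<alpha> * (1 - s) - (q + 1 - c)) - D n"
    by (simp add: algebra_simps)
  also have "\<dots> = D (Suc n) - D n + K * hyp2F1_coeff a b (c + 1) n"
    unfolding rational D_Suc shift by (simp add: algebra_simps)
  finally show ?thesis
    unfolding \<alpha>_def s_def r_def K_def .
qed

lemma hyp3F2_contiguous_combination:
  fixes a b c q :: real
  defines "t \<equiv> hyp2F1_coeff a b c"
  assumes "c \<notin> \<int>\<^sub>\<le>\<^sub>0" "a + b < c + 1" "q > -1"
  shows "(q + 1 - a) * (q + 1 - b) / (q + 1) * (\<Sum>n. t n * (1 - real n / (q + 1 + real n)))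
           - (q + 1 - c) * (\<Sum>n. t n * (1 - real n / (q + real n)))
         = (c - a) * (c - b) / c * (\<Sum>n. hyp2F1_coeff a b (c + 1) n)"
proof -
  define D where "D = (\<lambda>n. (c - q - 1) * (hyp2F1_coeff a b c n * (real n / (q + real n))))"
  have c1: "c + 1 \<notin> \<int>\<^sub>\<le>\<^sub>0" "a + b < c + 1"
    using plus_of_nat_notin_nonpos_Ints[OF assms(2), of 1] assms(3) by simp_all
  have "(\<lambda>n. real n / (q + real n)) \<longlonglongrightarrow> 1"
    by real_asymp
  with LIMSEQ_zero_if_bigo_powr[OF hyp2F1_coeff_bigo[OF assms(2)]] assms(3)
  have "D \<longlonglongrightarrow> (c - q - 1) * (0 * 1)"
    unfolding D_def by (intro tendsto_mult tendsto_const) simp_all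
  then have "(\<lambda>n. D (Suc n) - D n) sums (0 - D 0)"
    by (intro telescope_sums) simp
  moreover have "(\<lambda>n. (c - a) * (c - b) / c * hyp2F1_coeff a b (c + 1) n)
                   sums ((c - a) * (c - b) / c * (\<Sum>n. hyp2F1_coeff a b (c + 1) n))"
    using summable_rabs_cancel[OF summable_hyp2F1_coeff[OF c1]] by (intro sums_mult summable_sums)
  ultimately have telescoping:
    "(\<lambda>n. D (Suc n) - D n + (c - a) * (c - b) / c * hyp2F1_coeff a b (c + 1) n)
       sums ((c - a) * (c - b) / c * (\<Sum>n. hyp2F1_coeff a b (c + 1) n))"
    using sums_add by (fastforce simp: D_def)
  have "(\<lambda>n. (q + 1 - a) * (q + 1 - b) / (q + 1) * (t n * (1 - real n / (q + 1 + real n)))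
                - (q + 1 - c) * (t n * (1 - real n / (q + real n))))
           sums ((q + 1 - a) * (q + 1 - b) / (q + 1) * (\<Sum>n. t n * (1 - real n / (q + 1 + real n)))
                 - (q + 1 - c) * (\<Sum>n. t n * (1 - real n / (q + real n))))"
    unfolding t_def using summable_hyp2F1_coeff_weighted[OF assms(2,3)]
    by (intro sums_diff sums_mult summable_sums)
  also have "(\<lambda>n. (q + 1 - a) * (q + 1 - b) / (q + 1) * (t n * (1 - real n / (q + 1 + real n)))
                     - (q + 1 - c) * (t n * (1 - real n / (q + real n))))
             = (\<lambda>n. D (Suc n) - D n + (c - a) * (c - b) / c * hyp2F1_coeff a b (c + 1) n)"
    unfolding t_def D_def by (rule ext hyp3F2_contiguous_term[OF assms(2,4)])+
  finally show ?thesis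
    using telescoping by (rule sums_unique2)
qed

theorem lemma7p4:
  fixes a b c q :: real
  assumes "c + 1 > a + b"
    and "\<forall>n::nat. c \<noteq> - real n"
    and "q > -1"
  shows "(q + 1 - a) * (q + 1 - b) / (q + 1) * hyp3F2 a b (q + 1) c (q + 2) 1
           - (q + 1 - c) * hyp3F2 a b q c (q + 1) 1
         = Gamma c * Gamma (c + 1 - a - b) * rGamma (c - a) * rGamma (c - b)"
proof -
  have c: "c \<notin> \<int>\<^sub>\<le>\<^sub>0"
    using assms(2) by (auto elim!: nonpos_Ints_cases')
  have "q + 1 \<notin> \<int>\<^sub>\<le>\<^sub>0" "q + 1 + 1 \<notin> \<int>\<^sub>\<le>\<^sub>0" "c + 1 \<notin> \<int>\<^sub>\<le>\<^sub>0"
    using assms(3) plus_of_nat_notin_nonpos_Ints[OF c, of 1] by auto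
  note weighted = hyp3F2_as_weighted_hyp2F1_sum[OF this(1)] hyp3F2_as_weighted_hyp2F1_sum[OF this(2)]
  have "q + 2 = q + 1 + 1"
    by simp
  then have "(q + 1 - a) * (q + 1 - b) / (q + 1) * hyp3F2 a b (q + 1) c (q + 2) 1
               - (q + 1 - c) * hyp3F2 a b q c (q + 1) 1
             = (c - a) * (c - b) / c * (\<Sum>n. hyp2F1_coeff a b (c + 1) n)"
    using hyp3F2_contiguous_combination[OF c assms(1,3)] by (simp only: weighted)
  also have "\<dots> = (c - a) * (c - b) / c
                     * (Gamma (c + 1) * Gamma (c + 1 - a - b) * rGamma (c + 1 - a) * rGamma (c + 1 - b))"
    using gauss_hyp2F1_sum[OF \<open>c + 1 \<notin> \<int>\<^sub>\<le>\<^sub>0\<close> assms(1)] by (simp add: algebra_simps)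
  also have "\<dots> = Gamma c * Gamma (c + 1 - a - b) * rGamma (c - a) * rGamma (c - b)"
    by (rule Gamma_quotient_shift[OF c])
  finally show ?thesis .
qed

end
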